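(* Let $v\equiv 1$ or $7\pmod{24}$ and $n=\frac{v-1}{6}$. If a cyclic three-fold triple system CTS$(v,3)$ has fine structure $(c_1,c_2,c_3)$ with $c_2=t$ and $c_3=s$, then $0\le s\le n$ and $0\le t\le n-s$.
   Context: A cyclic $\lambda$-fold triple system CTS$(v,\lambda)$ is a multiset $\mathcal B$ of 3-element subsets (blocks) of $\mathbb Z_v$ such that every 2-element subset of $\mathbb Z_v$ is contained in exactly $\lambda$ blocks (counted with multiplicity), and $\mathcal B$ is invariant under the translation $x\mapsto x+1$. Thus $\mathcal B$ is a union of translation orbits of 3-subsets with multiplicities; a base block is an orbit representative. The fine structure is $(c_1,\ldots,c_\lambda)$, where $c_i$ is the number of distinct base blocks (orbits) occurring with multiplicity exactly $i$. *)

theory Defs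
  imports Main "HOL-Library.Multiset"
begin

text \<open>Z_v is modelled by {0..<v} with addition mod v; blocks are 3-subsets of {0..<v}.\<close>

definition shift :: "nat \<Rightarrow> nat set \<Rightarrow> nat set" where
  "shift v B = (\<lambda>x. (x + 1) mod v) ` B"

definition is_CTS :: "nat \<Rightarrow> nat \<Rightarrow> nat set multiset \<Rightarrow> bool" where
  "is_CTS v lam M \<longleftrightarrow>
     (\<forall>B \<in># M. B \<subseteq> {..<v} \<and> card B = 3) \<and>
     (\<forall>x y. x < v \<longrightarrow> y < v \<longrightarrow> x \<noteq> y \<longrightarrow>
        size (filter_mset (\<lambda>B. {x, y} \<subseteq> B) M) = lam) \<and>
     image_mset (shift v) M = M"

definition orbit :: "nat \<Rightarrow> nat set \<Rightarrow> nat set set" where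
  "orbit v B = {(shift v ^^ k) B | k. True}"

definition fine_c :: "nat \<Rightarrow> nat set multiset \<Rightarrow> nat \<Rightarrow> nat" where
  "fine_c v M i = card {orbit v B | B. B \<in># M \<and> count M B = i}"

end

theory Submission
  imports Defs "HOL-Number_Theory.Cong"
begin

text \<open>Since 3 does not divide v, no nontrivial translation fixes a block: it would shift
  the sum of the block's elements by 3 d, which is nonzero mod v. Hence the orbit of every block
  contains three blocks through 0. Two distinct blocks of multiplicity at least 2 through 0 meet
  only in 0, as a common pair would be covered at least 4 > 3 times. So the s + t orbits of
  multiplicity 2 or 3 yield 3 (s + t) blocks through 0 whose remaining points are disjoint pairs
  in {1, ..., v - 1}, i.e. 6 (s + t) \<le> v - 1.\<close>

lemma card_le_of_disjoint_family:
  assumes "finite S" "\<And>i. i \<in> I \<Longrightarrow> A i \<subseteq> S" "\<And>i. i \<in> I \<Longrightarrow> k \<le> card (A i)"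
    and "\<And>i j. i \<in> I \<Longrightarrow> j \<in> I \<Longrightarrow> i \<noteq> j \<Longrightarrow> A i \<inter> A j = {}"
  shows "k * card I \<le> card S"
proof (cases "finite I")
  case True
  have fin: "\<forall>i\<in>I. finite (A i)" using assms(1,2) finite_subset by blast
  have "k * card I = (\<Sum>i\<in>I. k)" by simp
  also have "\<dots> \<le> (\<Sum>i\<in>I. card (A i))" using assms(3) by (rule sum_mono)
  also have "\<dots> = card (\<Union>i\<in>I. A i)" using card_UN_disjoint[OF True fin] assms(4) by simp
  also have "\<dots> \<le> card S" using assms(1,2) by (intro card_mono) auto
  finally show ?thesis .
qed simp

definition translate :: "nat \<Rightarrow> nat \<Rightarrow> nat set \<Rightarrow> nat set" where
  "translate v k B = (\<lambda>x. (x + k) mod v) ` B"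

lemma translate_translate: "translate v j (translate v k B) = translate v (k + j) B"
  unfolding translate_def image_image by (simp add: mod_add_left_eq add.assoc)

lemma translate_mod: "translate v (k mod v) B = translate v k B"
  unfolding translate_def by (simp add: mod_add_right_eq)

lemma translate_0: "B \<subseteq> {..<v} \<Longrightarrow> translate v 0 B = B"
  unfolding translate_def by (auto simp: image_iff subset_iff)

lemma translate_period: "B \<subseteq> {..<v} \<Longrightarrow> translate v v B = B"
  using translate_mod[of v v B] by (simp add: translate_0)

lemma translate_subset: "0 < v \<Longrightarrow> translate v k B \<subseteq> {..<v}"
  unfolding translate_def by auto

lemma inj_on_add_mod: "inj_on (\<lambda>x::nat. (x + k) mod v) {..<v}"
proof
  fix x y assume x: "x \<in> {..<v}" and y: "y \<in> {..<v}" and eq: "(x + k) mod v = (y + k) mod v"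
  from eq have "[x + k = y + k] (mod v)" unfolding cong_def .
  then have "[x = y] (mod v)" by (simp only: cong_add_rcancel_nat)
  with x y show "x = y" by (simp add: cong_less_modulus_unique_nat)
qed

lemma funpow_shift: "B \<subseteq> {..<v} \<Longrightarrow> (shift v ^^ k) B = translate v k B"
proof (induction k)
  case (Suc k)
  have "shift v X = translate v 1 X" for X by (simp add: shift_def translate_def)
  with Suc show ?case by (simp add: translate_translate)
qed (simp add: translate_0)

lemma orbit_eq_translates: "B \<subseteq> {..<v} \<Longrightarrow> orbit v B = range (\<lambda>k. translate v k B)"
  unfolding orbit_def by (auto simp: funpow_shift)

lemma finite_orbit:
  assumes "0 < v" "B \<subseteq> {..<v}"
  shows "finite (orbit v B)"
proof (rule finite_subset)
  show "orbit v B \<subseteq> Pow {..<v}"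
    using assms by (auto simp: orbit_eq_translates dest: translate_subset[of v])
qed simp

lemma self_in_orbit: "B \<in> orbit v B"
  unfolding orbit_def by (auto intro!: exI[of _ 0])

lemma orbit_eq_if_mem:
  assumes "0 < v" "B \<subseteq> {..<v}" "X \<in> orbit v B"
  shows "orbit v X = orbit v B"
proof -
  obtain k where X: "X = translate v k B" using assms by (auto simp: orbit_eq_translates)
  have from_X: "translate v j B = translate v (j + (v - 1) * k) X" for j
  proof -
    have "translate v j B = translate v (j + v * k) B"
      by (metis translate_mod mod_mult_self2)
    also have "j + v * k = k + (j + (v - 1) * k)"
      using assms(1) by (cases v) (simp_all add: algebra_simps)
    finally show ?thesis by (simp add: X translate_translate)
  qed
  have "X \<subseteq> {..<v}" using X assms(1) by (simp add: translate_subset)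
  then have "orbit v X = range (\<lambda>j. translate v j X)" by (rule orbit_eq_translates)
  also have "\<dots> = range (\<lambda>j. translate v j B)"
  proof
    show "range (\<lambda>j. translate v j X) \<subseteq> range (\<lambda>j. translate v j B)"
      by (auto simp: X translate_translate)
    show "range (\<lambda>j. translate v j B) \<subseteq> range (\<lambda>j. translate v j X)"
      using from_X by blast
  qed
  finally show ?thesis using assms(2) by (simp add: orbit_eq_translates)
qed

text \<open>A translation fixing B shifts the element sum of B by card B * d, which must vanish mod v.\<close>
lemma translate_fixed_imp_dvd:
  assumes "B \<subseteq> {..<v}" "translate v d B = B"
  shows "v dvd card B * d"
proof -
  have inj: "inj_on (\<lambda>x. (x + d) mod v) B"
    using inj_on_add_mod assms(1) by (rule inj_on_subset)
  have "\<Sum>B mod v = (\<Sum>x\<in>B. (x + d) mod v) mod v"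
    using sum.reindex[OF inj, of id] assms(2) by (simp add: translate_def)
  also have "(\<Sum>x\<in>B. (x + d) mod v) mod v = (\<Sum>x\<in>B. x + d) mod v"
    by (rule mod_sum_eq)
  also have "(\<Sum>x\<in>B. x + d) = \<Sum>B + card B * d"
    by (simp add: sum.distrib)
  finally have "[\<Sum>B + card B * d = \<Sum>B] (mod v)"
    by (simp add: cong_def)
  then show ?thesis
    unfolding cong_add_lcancel_0_nat cong_0_iff .
qed

lemma translate_fixed_imp_zero:
  assumes "B \<subseteq> {..<v}" "coprime v (card B)" "translate v d B = B" "d < v"
  shows "d = 0"
proof -
  have "v dvd card B * d" using translate_fixed_imp_dvd assms(1,3) .
  with assms(2) have "v dvd d" by (simp add: coprime_dvd_mult_right_iff)
  with assms(4) show ?thesis by (metis dvd_imp_le leD neq0_conv)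
qed

text \<open>The translates of B by -a, for a in B, all contain 0 and are pairwise distinct.\<close>
lemma card_le_card_orbit_through_0:
  assumes "0 < v" "B \<subseteq> {..<v}" "coprime v (card B)"
  shows "card B \<le> card (orbit v B \<inter> {X. 0 \<in> X})"
proof -
  let ?g = "\<lambda>a. translate v (v - a) B"
  have inj: "inj_on ?g B"
  proof
    fix a b assume a: "a \<in> B" and b: "b \<in> B" and eq: "?g a = ?g b"
    have ab: "a < v" "b < v" using a b assms(2) by auto
    have "translate v ((v - b + a) mod v) B = translate v a (?g b)"
      by (simp add: translate_translate translate_mod)
    also have "\<dots> = translate v (v - a + a) B"
      by (simp only: eq [symmetric] translate_translate)
    also have "\<dots> = B"
      using ab(1) assms(2) by (simp add: translate_period)
    finally have vanish: "(v - b + a) mod v = 0"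
      using translate_fixed_imp_zero assms(1,2,3) by simp
    show "a = b"
    proof (cases a b rule: linorder_cases)
      case less
      with ab vanish show ?thesis by simp
    next
      case greater
      then have "v - b + a = (a - b) + v" using ab by simp
      then have "(v - b + a) mod v = (a - b + v) mod v" by (rule arg_cong)
      also have "\<dots> = a - b" using ab by simp
      finally show ?thesis using vanish greater by simp
    qed
  qed
  have "?g ` B \<subseteq> orbit v B \<inter> {X. 0 \<in> X}"
  proof
    fix X assume "X \<in> ?g ` B"
    then obtain a where a: "a \<in> B" "X = ?g a" by blast
    then have "(a + (v - a)) mod v \<in> X" unfolding translate_def by blast
    moreover have "a < v" using a(1) assms(2) by blast
    ultimately show "X \<in> orbit v B \<inter> {X. 0 \<in> X}"
      using a(2) assms(2) by (auto simp: orbit_eq_translates)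
  qed
  moreover have "finite (orbit v B)" using assms(1,2) by (rule finite_orbit)
  ultimately have "card (?g ` B) \<le> card (orbit v B \<inter> {X. 0 \<in> X})"
    by (intro card_mono) auto
  with inj show ?thesis by (simp add: card_image)
qed

lemma count_shift:
  assumes "is_CTS v lam M" "0 < v" "B \<subseteq> {..<v}"
  shows "count M (shift v B) = count M B"
proof -
  have inj: "inj_on (shift v) (Pow {..<v})"
  proof (rule inj_onI)
    fix X Y assume "X \<in> Pow {..<v}" "Y \<in> Pow {..<v}" "shift v X = shift v Y"
    then show "X = Y"
      unfolding shift_def using inj_on_image_eq_iff[OF inj_on_add_mod[of 1 v]] by blast
  qed
  have blocks: "set_mset M \<subseteq> Pow {..<v}" using assms(1) by (auto simp: is_CTS_def)
  have "count M (shift v B) = count (image_mset (shift v) M) (shift v B)"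
    using assms(1) by (simp add: is_CTS_def)
  also have "\<dots> = sum (count M) (shift v -` {shift v B} \<inter> set_mset M)"
    by (rule count_image_mset)
  also have "shift v -` {shift v B} \<inter> set_mset M = {B} \<inter> set_mset M"
    using blocks assms(3) by (auto simp: inj_on_eq_iff[OF inj])
  finally show ?thesis by (cases "B \<in># M") (auto simp: not_in_iff)
qed

lemma count_eq_if_mem_orbit:
  assumes "is_CTS v lam M" "0 < v" "B \<subseteq> {..<v}" "X \<in> orbit v B"
  shows "count M X = count M B"
proof -
  obtain k where X: "X = (shift v ^^ k) B" using assms(4) by (auto simp: orbit_def)
  have "count M ((shift v ^^ k) B) = count M B"
  proof (induction k)
    case (Suc k)
    have "(shift v ^^ k) B \<subseteq> {..<v}"
      using assms(2,3) by (simp add: funpow_shift translate_subset)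
    with Suc show ?case using count_shift[OF assms(1,2)] by simp
  qed simp
  with X show ?thesis by simp
qed

lemma count_add_count_le:
  assumes "is_CTS v lam M" "X \<noteq> Y" "x < v" "y < v" "x \<noteq> y" "{x, y} \<subseteq> X" "{x, y} \<subseteq> Y"
  shows "count M X + count M Y \<le> lam"
proof -
  let ?P = "\<lambda>B. {x, y} \<subseteq> B"
  have "replicate_mset (count M X) X + replicate_mset (count M Y) Y \<subseteq># filter_mset ?P M"
    using assms(2,6,7) by (auto simp: subseteq_mset_def)
  then have "count M X + count M Y \<le> size (filter_mset ?P M)"
    using size_mset_mono by fastforce
  also have "\<dots> = lam" using assms(1,3,4,5) by (simp add: is_CTS_def)
  finally show ?thesis .
qed

text \<open>Two distinct blocks of multiplicity at least h through 0 share no other point,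
  since a pair would then lie in at least 2 h > lam blocks.\<close>
lemma card_heavy_blocks_through_0:
  assumes "is_CTS v lam M" "lam < 2 * h"
  shows "2 * card {X. X \<in># M \<and> h \<le> count M X \<and> 0 \<in> X} \<le> v - 1"
proof -
  let ?D = "{X. X \<in># M \<and> h \<le> count M X \<and> 0 \<in> X}"
  have block: "X \<subseteq> {..<v} \<and> card X = 3" if "X \<in> ?D" for X
    using that assms(1) by (auto simp: is_CTS_def)
  have "2 * card ?D \<le> card {1..<v}"
  proof (rule card_le_of_disjoint_family[where A = "\<lambda>X. X - {0}"])
    show "X - {0} \<subseteq> {1..<v}" if "X \<in> ?D" for X
      using block[OF that] by auto
    show "2 \<le> card (X - {0})" if "X \<in> ?D" for X
      using block[OF that] that by simp
    show "(X - {0}) \<inter> (Y - {0}) = {}" if "X \<in> ?D" "Y \<in> ?D" "X \<noteq> Y" for X Y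
    proof (rule ccontr)
      assume "(X - {0}) \<inter> (Y - {0}) \<noteq> {}"
      then obtain y where "y \<in> X" "y \<in> Y" "y \<noteq> 0" by blast
      moreover have "y < v" using block[OF that(1)] \<open>y \<in> X\<close> by blast
      ultimately have "count M X + count M Y \<le> lam"
        using that by (intro count_add_count_le[OF assms(1), of X Y 0 y]) auto
      with that assms(2) show False by simp
    qed
  qed simp
  then show ?thesis by simp
qed

lemma card_heavy_orbits:
  assumes "is_CTS v lam M" "0 < v" "coprime v 3"
  shows "3 * card {orbit v B | B. B \<in># M \<and> h \<le> count M B}
    \<le> card {X. X \<in># M \<and> h \<le> count M X \<and> 0 \<in> X}"
proof (rule card_le_of_disjoint_family[where A = "\<lambda>Q. Q \<inter> {X. 0 \<in> X}"])
  have block: "B \<subseteq> {..<v} \<and> card B = 3" if "B \<in># M" for B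
    using that assms(1) by (auto simp: is_CTS_def)
  show "finite {X. X \<in># M \<and> h \<le> count M X \<and> 0 \<in> X}"
    by (rule finite_subset[of _ "set_mset M"]) auto
  fix Q assume "Q \<in> {orbit v B | B. B \<in># M \<and> h \<le> count M B}"
  then obtain B where B: "Q = orbit v B" "B \<in># M" "h \<le> count M B" by blast
  show "3 \<le> card (Q \<inter> {X. 0 \<in> X})"
    using card_le_card_orbit_through_0[OF assms(2), of B] block[OF B(2)] assms(3) B(1) by simp
  show "Q \<inter> {X. 0 \<in> X} \<subseteq> {X. X \<in># M \<and> h \<le> count M X \<and> 0 \<in> X}"
  proof
    fix X assume X: "X \<in> Q \<inter> {X. 0 \<in> X}"
    then have "count M X = count M B"
      using count_eq_if_mem_orbit[OF assms(1,2)] block[OF B(2)] B(1) by blast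
    with B(2,3) X show "X \<in> {X. X \<in># M \<and> h \<le> count M X \<and> 0 \<in> X}"
      by (auto simp flip: count_greater_zero_iff)
  qed
  fix Q' assume "Q' \<in> {orbit v B | B. B \<in># M \<and> h \<le> count M B}" "Q \<noteq> Q'"
  then obtain B' where B': "Q' = orbit v B'" "B' \<in># M" by blast
  show "Q \<inter> {X. 0 \<in> X} \<inter> (Q' \<inter> {X. 0 \<in> X}) = {}"
  proof (rule ccontr)
    assume "Q \<inter> {X. 0 \<in> X} \<inter> (Q' \<inter> {X. 0 \<in> X}) \<noteq> {}"
    then obtain X where "X \<in> orbit v B" "X \<in> orbit v B'" using B(1) B'(1) by blast
    then have "orbit v B = orbit v B'"
      using orbit_eq_if_mem[OF assms(2)] block B(2) B'(2) by metis
    with B(1) B'(1) \<open>Q \<noteq> Q'\<close> show False by simp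
  qed
qed

lemma fine_c_add_fine_c_le:
  assumes "is_CTS v lam M" "0 < v" "i \<noteq> j" "h \<le> i" "h \<le> j"
  shows "fine_c v M i + fine_c v M j \<le> card {orbit v B | B. B \<in># M \<and> h \<le> count M B}"
proof -
  let ?S = "\<lambda>i. {orbit v B | B. B \<in># M \<and> count M B = i}"
  have finite: "finite {orbit v B | B. B \<in># M \<and> P B}" for P
    by (rule finite_subset[of _ "orbit v ` set_mset M"]) auto
  have "?S i \<inter> ?S j = {}"
  proof (rule ccontr)
    assume "?S i \<inter> ?S j \<noteq> {}"
    then obtain B B' where B: "B \<in># M" "count M B = i" and B': "count M B' = j"
      and eq: "orbit v B = orbit v B'" by blast
    have "B' \<in> orbit v B" using eq self_in_orbit by metis
    then have "count M B' = count M B"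
      using count_eq_if_mem_orbit[OF assms(1,2)] B(1) assms(1) by (auto simp: is_CTS_def)
    with B B' assms(3) show False by simp
  qed
  then have "fine_c v M i + fine_c v M j = card (?S i \<union> ?S j)"
    unfolding fine_c_def using finite by (simp add: card_Un_disjoint)
  also have "\<dots> \<le> card {orbit v B | B. B \<in># M \<and> h \<le> count M B}"
    using assms(4,5) finite by (intro card_mono) auto
  finally show ?thesis .
qed

theorem mainTheorem7:
  fixes v n s t :: nat and M :: "nat set multiset"
  assumes "v mod 24 = 1 \<or> v mod 24 = 7"
    and "n = (v - 1) div 6"
    and "is_CTS v 3 M"
    and "fine_c v M 2 = t"
    and "fine_c v M 3 = s"
  shows "0 \<le> s \<and> s \<le> n \<and> 0 \<le> t \<and> t \<le> n - s"
proof -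
  have "0 < v" "\<not> 3 dvd v" using assms(1) by presburger+
  have "coprime v 3"
    using prime_imp_coprime[of 3 v] \<open>\<not> 3 dvd v\<close> by (simp add: coprime_commute)
  have "t + s \<le> card {orbit v B | B. B \<in># M \<and> 2 \<le> count M B}"
    using fine_c_add_fine_c_le[OF assms(3) \<open>0 < v\<close>, of 2 3 2] assms(4,5) by simp
  also have "3 * \<dots> \<le> card {X. X \<in># M \<and> 2 \<le> count M X \<and> 0 \<in> X}"
    by (rule card_heavy_orbits[OF assms(3) \<open>0 < v\<close> \<open>coprime v 3\<close>])
  finally have "6 * (t + s) \<le> 2 * card {X. X \<in># M \<and> 2 \<le> count M X \<and> 0 \<in> X}"
    by simp
  also have "\<dots> \<le> v - 1"
    by (rule card_heavy_blocks_through_0[OF assms(3)]) simp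
  finally have "s + t \<le> n" using assms(2) by (simp add: less_eq_div_iff_mult_less_eq mult.commute)
  then show ?thesis by linarith
qed

end
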